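(* Let $X$ be a real Banach space, $I=\{1,\ldots,m\}$, $J=\{1,\ldots,l\}$, $f_i,g_j\colon X\to\mathbb{R}$, $M=\{x\in X\mid f_i(x)=0\ \forall i\in I,\ g_j(x)\le0\ \forall j\in J\}$, $\overline{x}\in M$, $J(\overline{x})=\{j\in J\mid g_j(\overline{x})=0\}$, and let $f_i$, $i\in I$, and $g_j$, $j\in J(\overline{x})$, be quasidifferentiable at $\overline{x}$ with given quasidifferentials. Consider the conditions $$[\mathscr{D} f_i(\overline{x})]^+\cap\operatorname{cl}^*\operatorname{lin}\{[\mathscr{D} f_k(\overline{x})]^+\mid k\ne i\}=\emptyset\quad\forall i\in I,\qquad(\mathrm{A})$$ $$\operatorname{co}\{[\mathscr{D} g_j(\overline{x})]^+\mid j\in J(\overline{x})\}\cap\operatorname{cl}^*\operatorname{lin}\{[\mathscr{D} f_i(\overline{x})]^+\mid i\in I\}=\emptyset.\qquad(\mathrm{B})$$ Call "condition (Q) for given $x_i^*,y_i^*,z_j^*$" the conjunction of: (1) for any $i\in I$ there exists $v_i\in X$ with $s(\underline{\partial} f_i(\overline{x})+y_i^*,v_i)<0$ and, for all $k\ne i$, $s(\underline{\partial} f_k(\overline{x})+y_k^*,v_i)\le0$ and $s(-x_k^*-\overline{\partial} f_k(\overline{x}),v_i)\le0$; (2) for any $i\in I$ there exists $w_i\in X$ with $s(-x_i^*-\overline{\partial} f_i(\overline{x}),w_i)<0$ and, for all $k\ne i$, $s(-x_k^*-\overline{\partial} f_k(\overline{x}),w_i)\le0$ and $s(\underline{\partial}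 f_k(\overline{x})+y_k^*,w_i)\le0$; (3) there exists $v_0\in X$ with $s(\underline{\partial} g_j(\overline{x})+z_j^*,v_0)<0$ for all $j\in J(\overline{x})$ and $s(\underline{\partial} f_i(\overline{x})+y_i^*,v_0)\le0$, $s(-x_i^*-\overline{\partial} f_i(\overline{x}),v_0)\le0$ for all $i\in I$. Then: (a) if (A) and (B) hold, then condition (Q) holds for all $x_i^*\in\underline{\partial} f_i(\overline{x})$, $y_i^*\in\overline{\partial} f_i(\overline{x})$, $i\in I$, and $z_j^*\in\overline{\partial} g_j(\overline{x})$, $j\in J(\overline{x})$. (b) If the linear spans appearing in (A) and (B) are weak$^*$ closed (in particular, if $X$ is finite dimensional), then conversely, validity of (Q) for all such $x_i^*,y_i^*,z_j^*$ implies (A) and (B). (c) If the span in (A) is weak$^*$ closed for every $i\in I$, then (A) and (B) hold if and only if the Mangasarian–Fromovitz constraint qualification in terms of quasidifferentials holds at $\overline{x}$, i.e. the sets $[\mathscr{D} f_i(\overline{x})]^+$, $i\in I$, are strongly linearly independent and there exists $v_0\in X$ such that $\langle x^*,v_0\rangle=0$ for all $x^*\in[\mathscr{D} f_i(\overline{x})]^+$, $i\in I$, and $\langle x^*,v_0\rangle<0$ for all $x^*\in[\mathscr{D} g_j(\overline{x})]^+$, $j\in J(\overline{x})$.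
   Context: $X^*$ is the dual with pairing $\langle\cdot,\cdot\rangle$; $\operatorname{cl}^*$ is weak$^*$ closure. $f$ is quasidifferentiable at $x$ if the directional derivative $f'(x,v)=\lim_{\alpha\to+0}(f(x+\alpha v)-f(x))/\alpha$ exists finitely for all $v$ and there is a pair $\mathscr{D} f(x)=[\underline{\partial} f(x),\overline{\partial} f(x)]$ of convex weak$^*$ compact subsets of $X^*$ with $f'(x,v)=\max_{x^*\in\underline{\partial} f(x)}\langle x^*,v\rangle+\min_{y^*\in\overline{\partial} f(x)}\langle y^*,v\rangle$ for all $v$; a specific such pair is fixed for each function. The quasidifferential sum is $[\mathscr{D} f(x)]^+=\underline{\partial} f(x)+\overline{\partial} f(x)$ (Minkowski sum). $s(C,v)=\sup_{x^*\in C}\langle x^*,v\rangle$. $\operatorname{lin}$ denotes linear span and $\operatorname{co}$ convex hull of the union of the listed sets. Sets $A_1,\ldots,A_m$ in a real vector space are strongly linearly independent if $A_i\cap\operatorname{lin}\{A_k\mid k\ne i\}=\emptyset$ for all $i$. *)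

theory Defs
  imports "HOL-Analysis.Analysis"
begin

definition wstar_topology :: "('a::real_normed_vector \<Rightarrow>\<^sub>L real) topology" where
  "wstar_topology =
     topology_generated_by {{\<phi>. blinfun_apply \<phi> v \<in> U} | v U. open (U::real set)}"

definition supp :: "('a::real_normed_vector \<Rightarrow>\<^sub>L real) set \<Rightarrow> 'a \<Rightarrow> real" where
  "supp C v = (SUP \<phi>\<in>C. blinfun_apply \<phi> v)"

definition msum :: "('a::real_normed_vector \<Rightarrow>\<^sub>L real) set \<Rightarrow> ('a \<Rightarrow>\<^sub>L real) set
    \<Rightarrow> ('a \<Rightarrow>\<^sub>L real) set" where
  "msum A B = {a + b | a b. a \<in> A \<and> b \<in> B}"

definition is_quasidiff ::
  "('a::real_normed_vector \<Rightarrow> real) \<Rightarrow> 'a \<Rightarrow> ('a \<Rightarrow>\<^sub>L real) set \<Rightarrow> ('a \<Rightarrow>\<^sub>L real) set \<Rightarrow> bool" where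
  "is_quasidiff f x L U \<longleftrightarrow>
     L \<noteq> {} \<and> U \<noteq> {} \<and> convex L \<and> convex U \<and>
     compactin wstar_topology L \<and> compactin wstar_topology U \<and>
     (\<forall>v. ((\<lambda>\<alpha>. (f (x + \<alpha> *\<^sub>R v) - f x) / \<alpha>) \<longlongrightarrow>
             (SUP \<phi>\<in>L. blinfun_apply \<phi> v) + (INF \<psi>\<in>U. blinfun_apply \<psi> v)) (at_right 0))"

end

theory Submission
  imports Defs
begin

text \<open>
  Conditions (A) and (B) say that certain weak* compact convex subsets of the dual (the sums
  \<open>[D f_i]^+\<close>, respectively the convex hull of the \<open>[D g_j]^+\<close>) miss the weak* closure of a
  linear span. For a weak* compact convex set this is equivalent to the existence of a direction
  \<open>v\<close> in \<open>X\<close> that annihilates the span and is negative on the set: weak* compactness reduces the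
  separation to finitely many evaluation points, where a finite-dimensional Hahn--Banach argument
  applies. Since \<open>[D f_i]^+\<close> contains both \<open>L_i + y_i\<close> and \<open>x_i + U_i\<close>, such directions give
  the three parts of (Q), and for (B) the equivalence is literally the second half of the MFCQ.

  Conversely, assume (Q) and weak* closed spans. An element of \<open>[D f_i]^+\<close> in the span of the
  other \<open>[D f_k]^+\<close> is a combination of sums \<open>a_e + b_e\<close> with \<open>a_e \<in> L_k\<close> and \<open>b_e \<in> U_k\<close>.
  Choosing \<open>x_k\<close> and \<open>y_k\<close> as the means of these \<open>a_e\<close> and \<open>b_e\<close>, every direction satisfying the
  non-strict inequalities of (Q) makes each \<open>a_e + b_e\<close> vanish, contradicting the strict one;
  (B) follows in the same way.
\<close>

section \<open>Sublinear functionals on finitely many coordinates\<close>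

text \<open>Coordinate vectors are functions \<open>'b \<Rightarrow> real\<close>; as these carry no vector space structure,
  addition and scaling are written pointwise.\<close>

definition sublinear :: "(('b \<Rightarrow> real) \<Rightarrow> real) \<Rightarrow> bool" where
  "sublinear p \<longleftrightarrow> (\<forall>x y. p (\<lambda>v. x v + y v) \<le> p x + p y) \<and>
     (\<forall>c x. 0 < c \<longrightarrow> p (\<lambda>v. c * x v) \<le> c * p x)"

lemma sublinear_add: "sublinear p \<Longrightarrow> p (\<lambda>v. x v + y v) \<le> p x + p y"
  unfolding sublinear_def by blast

lemma sublinear_scale: "sublinear p \<Longrightarrow> 0 < c \<Longrightarrow> p (\<lambda>v. c * x v) \<le> c * p x"
  unfolding sublinear_def by blast

lemma sublinear_zero:
  assumes "sublinear p"
  shows "p (\<lambda>v. 0) = 0"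
  using sublinear_add[OF assms, of "\<lambda>v. 0" "\<lambda>v. 0"] sublinear_scale[OF assms, of "1/2" "\<lambda>v. 0"]
  by simp

lemma sublinear_pos_homogeneous:
  assumes "sublinear p" "0 \<le> c"
  shows "p (\<lambda>v. c * x v) = c * p x"
proof (cases "c = 0")
  case True
  then show ?thesis using sublinear_zero[OF assms(1)] by simp
next
  case False
  then have "0 < c" using assms(2) by simp
  have "p x = p (\<lambda>v. (1 / c) * (c * x v))" using \<open>c \<noteq> 0\<close> by simp
  also have "\<dots> \<le> (1 / c) * p (\<lambda>v. c * x v)" using \<open>0 < c\<close> by (intro sublinear_scale[OF assms(1)]) simp
  finally have "c * p x \<le> p (\<lambda>v. c * x v)" using \<open>0 < c\<close> by (simp add: field_simps)
  with sublinear_scale[OF assms(1) \<open>0 < c\<close>] show ?thesis by (intro antisym)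
qed

lemma sublinear_scale_lower:
  assumes "sublinear p"
  shows "s * p x \<le> p (\<lambda>v. s * x v)"
proof (cases "0 \<le> s")
  case True
  then show ?thesis using sublinear_pos_homogeneous[OF assms] by simp
next
  case False
  have "0 = p (\<lambda>v. s * x v + (- s) * x v)" using sublinear_zero[OF assms] by simp
  also have "\<dots> \<le> p (\<lambda>v. s * x v) + p (\<lambda>v. (- s) * x v)" by (rule sublinear_add[OF assms])
  also have "p (\<lambda>v. (- s) * x v) = (- s) * p x"
    by (rule sublinear_pos_homogeneous[OF assms]) (use False in simp)
  finally show ?thesis by simp
qed

lemma sublinear_INF:
  assumes "P \<noteq> {}" and bdd: "\<And>x. bdd_below (h x ` P)"
    and add: "\<And>x y s t. s \<in> P \<Longrightarrow> t \<in> P \<Longrightarrow> \<exists>r\<in>P. h (\<lambda>v. x v + y v) r \<le> h x s + h y t"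
    and scale: "\<And>c x s. 0 < c \<Longrightarrow> s \<in> P \<Longrightarrow> \<exists>r\<in>P. h (\<lambda>v. c * x v) r \<le> c * h x s"
  shows "sublinear (\<lambda>x. INF s\<in>P. h x s)"
proof -
  let ?q = "\<lambda>x. INF s\<in>P. h x s"
  have le: "?q x \<le> h x s" if "s \<in> P" for x s
    using bdd that by (rule cINF_lower)
  have ge: "r \<le> ?q x" if "\<And>s. s \<in> P \<Longrightarrow> r \<le> h x s" for r x
    using \<open>P \<noteq> {}\<close> that by (rule cINF_greatest)
  show ?thesis
    unfolding sublinear_def
  proof (intro conjI allI impI)
    fix x y
    have "?q (\<lambda>v. x v + y v) \<le> h x s + h y t" if "s \<in> P" "t \<in> P" for s t
      using add[OF that] le order_trans by blast
    then have "?q (\<lambda>v. x v + y v) - h y t \<le> ?q x" if "t \<in> P" for t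
      using that by (intro ge) (simp add: algebra_simps)
    then have "?q (\<lambda>v. x v + y v) - ?q x \<le> ?q y"
      by (intro ge) (simp add: algebra_simps)
    then show "?q (\<lambda>v. x v + y v) \<le> ?q x + ?q y" by simp
  next
    fix c :: real and x assume "0 < c"
    then have "?q (\<lambda>v. c * x v) \<le> c * h x s" if "s \<in> P" for s
      using scale[OF \<open>0 < c\<close> that] le order_trans by blast
    then have "?q (\<lambda>v. c * x v) / c \<le> ?q x"
      using \<open>0 < c\<close> by (intro ge) (simp add: divide_le_eq mult.commute)
    then show "?q (\<lambda>v. c * x v) \<le> c * ?q x"
      using \<open>0 < c\<close> by (simp add: divide_le_eq mult.commute)
  qed
qed

lemma sublinear_drop_coordinate:
  fixes a :: 'b
  assumes p: "sublinear p"
  defines "c \<equiv> p (\<lambda>v. if v = a then 1 else 0)"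
  defines "q \<equiv> \<lambda>y. INF s. p (y(a := s)) - c * s"
  shows "sublinear q" and "c * x a + q x \<le> p x"
proof -
  have "- p (\<lambda>v. - (y(a := 0)) v) \<le> p (y(a := s)) - c * s" for y s
  proof -
    have "s * c \<le> p (\<lambda>v. s * (if v = a then 1 else 0))"
      unfolding c_def by (rule sublinear_scale_lower[OF p])
    also have "(\<lambda>v. s * (if v = a then 1 else 0)) = (\<lambda>v. (y(a := s)) v + - (y(a := 0)) v)"
      by auto
    also have "p \<dots> \<le> p (y(a := s)) + p (\<lambda>v. - (y(a := 0)) v)"
      by (rule sublinear_add[OF p])
    finally show ?thesis by (simp add: algebra_simps)
  qed
  then have bdd: "bdd_below (range (\<lambda>s. p (y(a := s)) - c * s))" for y
    by (intro bdd_belowI2)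
  have add: "\<exists>r\<in>UNIV. p ((\<lambda>v. x v + y v)(a := r)) - c * r \<le> p (x(a := s)) - c * s + (p (y(a := t)) - c * t)"
    for x y s t
  proof -
    have "(\<lambda>v. x v + y v)(a := s + t) = (\<lambda>v. (x(a := s)) v + (y(a := t)) v)"
      by auto
    then show ?thesis
      using sublinear_add[OF p, of "x(a := s)" "y(a := t)"]
      by (intro bexI[of _ "s + t"]) (simp_all add: algebra_simps)
  qed
  have scale: "\<exists>r\<in>UNIV. p ((\<lambda>v. d * x v)(a := r)) - c * r \<le> d * (p (x(a := s)) - c * s)"
    if "0 < d" for d x s
  proof -
    have "(\<lambda>v. d * x v)(a := d * s) = (\<lambda>v. d * (x(a := s)) v)"
      by auto
    then show ?thesis
      using sublinear_pos_homogeneous[OF p, of d "x(a := s)"] that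
      by (intro bexI[of _ "d * s"]) (simp_all add: algebra_simps)
  qed
  show "sublinear q"
    unfolding q_def
    by (rule sublinear_INF[where h="\<lambda>y s. p (y(a := s)) - c * s", OF UNIV_not_empty bdd add scale])
  show "c * x a + q x \<le> p x"
    using cINF_lower[OF bdd, of "x a" x] unfolding q_def by simp
qed

lemma sublinear_dominates_linear:
  assumes "finite F" "sublinear p" "\<And>x y. (\<forall>v\<in>F. x v = y v) \<Longrightarrow> p x = p y"
  shows "\<exists>coef. \<forall>x. (\<Sum>v\<in>F. coef v * x v) \<le> p x"
  using assms
proof (induction F arbitrary: p rule: finite_induct)
  case empty
  then have "p x = p (\<lambda>v. 0)" for x by blast
  then show ?case using sublinear_zero[OF empty.prems(1)] by simp
next
  case (insert a G)
  define c where "c = p (\<lambda>v. if v = a then 1 else 0)"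
  define q where "q = (\<lambda>y. INF s. p (y(a := s)) - c * s)"
  have q_sublinear: "sublinear q" and q_le: "c * x a + q x \<le> p x" for x
    unfolding c_def q_def by (rule sublinear_drop_coordinate[OF insert.prems(1)])+
  have q_dep: "q x = q y" if "\<forall>v\<in>G. x v = y v" for x y
  proof -
    have "p (x(a := s)) = p (y(a := s))" for s
      using that by (intro insert.prems(2)) auto
    then show ?thesis unfolding q_def by simp
  qed
  obtain coef where coef: "\<And>x. (\<Sum>v\<in>G. coef v * x v) \<le> q x"
    using insert.IH[OF q_sublinear q_dep] by blast
  have "(\<Sum>v\<in>insert a G. (coef(a := c)) v * x v) \<le> p x" for x
  proof -
    have "(\<Sum>v\<in>G. (coef(a := c)) v * x v) = (\<Sum>v\<in>G. coef v * x v)"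
      using insert.hyps(2) by (intro sum.cong) auto
    then have "(\<Sum>v\<in>insert a G. (coef(a := c)) v * x v) = c * x a + (\<Sum>v\<in>G. coef v * x v)"
      using insert.hyps by simp
    also have "\<dots> \<le> c * x a + q x" using coef[of x] by (rule add_left_mono)
    also have "\<dots> \<le> p x" by (rule q_le)
    finally show ?thesis .
  qed
  then show ?case by blast
qed

lemma sublinear_Max_abs:
  assumes "finite F" "F \<noteq> {}"
  shows "sublinear (\<lambda>x. Max ((\<lambda>v. \<bar>x v\<bar>) ` F))"
proof -
  have ge: "\<bar>x v\<bar> \<le> Max ((\<lambda>v. \<bar>x v\<bar>) ` F)" if "v \<in> F" for x :: "'a \<Rightarrow> real" and v
    using assms that by (intro Max_ge) auto
  show ?thesis
    unfolding sublinear_def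
  proof (intro conjI allI impI)
    fix x y :: "'a \<Rightarrow> real"
    have "\<bar>x v + y v\<bar> \<le> Max ((\<lambda>v. \<bar>x v\<bar>) ` F) + Max ((\<lambda>v. \<bar>y v\<bar>) ` F)" if "v \<in> F" for v
      using ge[OF that, of x] ge[OF that, of y] by linarith
    then show "Max ((\<lambda>v. \<bar>x v + y v\<bar>) ` F) \<le> Max ((\<lambda>v. \<bar>x v\<bar>) ` F) + Max ((\<lambda>v. \<bar>y v\<bar>) ` F)"
      using assms by (subst Max_le_iff) auto
  next
    fix c :: real and x :: "'a \<Rightarrow> real" assume "0 < c"
    then have "\<bar>c * x v\<bar> \<le> c * Max ((\<lambda>v. \<bar>x v\<bar>) ` F)" if "v \<in> F" for v
      using ge[OF that, of x] by (simp add: abs_mult)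
    then show "Max ((\<lambda>v. \<bar>c * x v\<bar>) ` F) \<le> c * Max ((\<lambda>v. \<bar>x v\<bar>) ` F)"
      using assms by (subst Max_le_iff) auto
  qed
qed

lemma convex_scaled_combination:
  assumes "convex D" "a \<in> D" "b \<in> D" "0 \<le> s" "0 \<le> t"
  obtains d where "d \<in> D" "(s + t) *\<^sub>R d = s *\<^sub>R a + t *\<^sub>R b"
proof (cases "s + t = 0")
  case True
  with assms have "s = 0" "t = 0" by auto
  then show ?thesis using assms by (intro that[of a]) auto
next
  case False
  let ?d = "(s / (s + t)) *\<^sub>R a + (t / (s + t)) *\<^sub>R b"
  have "?d \<in> D"
    using assms False by (intro convexD) (auto simp: add_divide_distrib[symmetric])
  moreover have "(s + t) *\<^sub>R ?d = s *\<^sub>R a + t *\<^sub>R b"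
    using False by (simp add: scaleR_add_right)
  ultimately show ?thesis by (rule that)
qed

text \<open>The gauge of \<open>D\<close> relative to \<open>Q\<close>: as \<open>Q \<ge> 1\<close> on \<open>D\<close>, translating by \<open>t d\<close> costs at
  least \<open>t\<close>, so the infimum is finite.\<close>

lemma sublinear_gauge:
  fixes D :: "('a::real_normed_vector \<Rightarrow>\<^sub>L real) set"
  assumes Q: "sublinear Q" and D: "convex D" "D \<noteq> {}"
    and gap: "\<And>d. d \<in> D \<Longrightarrow> 1 \<le> Q (blinfun_apply d)"
  defines "p \<equiv> \<lambda>x. INF (t, d)\<in>{0..} \<times> D. Q (\<lambda>v. x v + t * blinfun_apply d v) - t"
  shows "sublinear p" and "d \<in> D \<Longrightarrow> p (\<lambda>v. - d v) \<le> -1"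
proof -
  define H where "H x = (\<lambda>(t, d). Q (\<lambda>v. x v + t * blinfun_apply d v) - t)" for x
  have p_eq: "p = (\<lambda>x. INF z\<in>{0..} \<times> D. H x z)"
    unfolding p_def H_def ..
  have "- Q (\<lambda>v. - x v) \<le> H x (t, d)" if "0 \<le> t" "d \<in> D" for x t d
  proof -
    have "t \<le> t * Q (blinfun_apply d)" using mult_left_mono[OF gap[OF that(2)] that(1)] by simp
    also have "\<dots> = Q (\<lambda>v. t * d v)" using sublinear_pos_homogeneous[OF Q that(1)] by simp
    also have "\<dots> = Q (\<lambda>v. (x v + t * d v) + - x v)" by simp
    also have "\<dots> \<le> Q (\<lambda>v. x v + t * d v) + Q (\<lambda>v. - x v)" by (rule sublinear_add[OF Q])
    finally show ?thesis unfolding H_def by simp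
  qed
  then have bdd: "bdd_below (H x ` ({0..} \<times> D))" for x
    by (intro bdd_belowI2) auto
  have add: "\<exists>r\<in>{0..} \<times> D. H (\<lambda>v. x v + y v) r \<le> H x z + H y z'"
    if "z \<in> {0..} \<times> D" "z' \<in> {0..} \<times> D" for x y z z'
  proof -
    obtain s a t b where z: "z = (s, a)" "z' = (t, b)"
      by fastforce
    with that have st: "0 \<le> s" "0 \<le> t" "a \<in> D" "b \<in> D"
      by auto
    obtain d where "d \<in> D" and d: "(s + t) *\<^sub>R d = s *\<^sub>R a + t *\<^sub>R b"
      using convex_scaled_combination[OF D(1) st(3,4,1,2)] .
    have "(s + t) * d v = s * a v + t * b v" for v
      using arg_cong[OF d, of "\<lambda>\<phi>. blinfun_apply \<phi> v"]
      by (simp add: blinfun.add_left blinfun.scaleR_left)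
    then have "H (\<lambda>v. x v + y v) (s + t, d) = Q (\<lambda>v. (x v + s * a v) + (y v + t * b v)) - (s + t)"
      unfolding H_def by (simp add: algebra_simps)
    also have "\<dots> \<le> H x z + H y z'"
      unfolding H_def z using sublinear_add[OF Q, of "\<lambda>v. x v + s * a v" "\<lambda>v. y v + t * b v"]
      by simp
    finally show ?thesis using \<open>d \<in> D\<close> st by (intro bexI[of _ "(s + t, d)"]) auto
  qed
  have scale: "\<exists>r\<in>{0..} \<times> D. H (\<lambda>v. c * x v) r \<le> c * H x z"
    if "0 < c" "z \<in> {0..} \<times> D" for c x z
  proof -
    obtain t d where z: "z = (t, d)"
      by fastforce
    with that(2) have td: "0 \<le> t" "d \<in> D"
      by auto
    have "H (\<lambda>v. c * x v) (c * t, d) = Q (\<lambda>v. c * (x v + t * d v)) - c * t"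
      unfolding H_def by (simp add: algebra_simps)
    also have "\<dots> = c * H x z"
      unfolding H_def z using sublinear_pos_homogeneous[OF Q, of c "\<lambda>v. x v + t * d v"] that(1)
      by (simp add: algebra_simps)
    finally show ?thesis using td that(1) by (intro bexI[of _ "(c * t, d)"]) auto
  qed
  show "sublinear p"
    unfolding p_eq using D(2) bdd add scale by (intro sublinear_INF) auto
  show "p (\<lambda>v. - d v) \<le> -1" if "d \<in> D"
    using cINF_lower[OF bdd, of "(1, d)" "\<lambda>v. - d v"] that sublinear_zero[OF Q]
    unfolding p_eq H_def by simp
qed

lemma uniform_gap_separation:
  fixes D :: "('a::real_normed_vector \<Rightarrow>\<^sub>L real) set"
  assumes F: "finite F" and D: "convex D" and gap: "\<And>d. d \<in> D \<Longrightarrow> \<exists>v\<in>F. 1 \<le> \<bar>d v\<bar>"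
  shows "\<exists>w. \<forall>d\<in>D. 1 \<le> d w"
proof (cases "D = {}")
  case True
  then show ?thesis by simp
next
  case False
  then have "F \<noteq> {}" using gap by blast
  define Q where "Q x = Max ((\<lambda>v. \<bar>x v\<bar>) ` F)" for x :: "'a \<Rightarrow> real"
  have Q: "sublinear Q"
    unfolding Q_def[abs_def] using sublinear_Max_abs[OF F \<open>F \<noteq> {}\<close>] .
  have Q_dep: "Q x = Q y" if "\<forall>v\<in>F. x v = y v" for x y
    unfolding Q_def using that by (intro arg_cong[where f=Max] image_cong) auto
  have Q_gap: "1 \<le> Q (blinfun_apply d)" if "d \<in> D" for d
    using gap[OF that] F unfolding Q_def by (auto intro: order_trans Max_ge)
  define p where "p x = (INF (t, d)\<in>{0..} \<times> D. Q (\<lambda>v. x v + t * blinfun_apply d v) - t)" for x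
  have p_sublinear: "sublinear p"
    unfolding p_def[abs_def] by (rule sublinear_gauge(1)[OF Q D False Q_gap])
  have p_neg: "p (\<lambda>v. - d v) \<le> -1" if "d \<in> D" for d
    unfolding p_def by (rule sublinear_gauge(2)[OF Q D False Q_gap that])
  have p_dep: "p x = p y" if "\<forall>v\<in>F. x v = y v" for x y
  proof -
    have "Q (\<lambda>v. x v + t * d v) = Q (\<lambda>v. y v + t * d v)" for t d
      using that by (intro Q_dep) simp
    then show ?thesis unfolding p_def by simp
  qed
  obtain coef where coef: "\<And>x. (\<Sum>v\<in>F. coef v * x v) \<le> p x"
    using sublinear_dominates_linear[OF F p_sublinear p_dep] by blast
  have "1 \<le> d (\<Sum>v\<in>F. coef v *\<^sub>R v)" if "d \<in> D" for d
  proof -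
    have "(\<Sum>v\<in>F. coef v * - d v) \<le> -1"
      using coef[of "\<lambda>v. - d v"] p_neg[OF that] by simp
    then show ?thesis by (simp add: blinfun.sum_right blinfun.scaleR_right sum_negf)
  qed
  then show ?thesis by blast
qed

section \<open>The weak* topology\<close>

definition wstar_box :: "('a::real_normed_vector \<Rightarrow>\<^sub>L real) \<Rightarrow> 'a set \<Rightarrow> real \<Rightarrow> ('a \<Rightarrow>\<^sub>L real) set" where
  "wstar_box k F e = {\<phi>. \<forall>v\<in>F. \<bar>blinfun_apply \<phi> v - blinfun_apply k v\<bar> < e}"

lemma wstar_box_mono: "F \<subseteq> G \<Longrightarrow> e' \<le> e \<Longrightarrow> wstar_box k G e' \<subseteq> wstar_box k F e"
  unfolding wstar_box_def by fastforce

lemma topspace_wstar_topology [simp]: "topspace wstar_topology = UNIV"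
  unfolding wstar_topology_def topology_generated_by_topspace by (blast intro: open_UNIV)

lemma openin_wstar_evaluation: "open U \<Longrightarrow> openin wstar_topology {\<phi>. blinfun_apply \<phi> v \<in> U}"
  unfolding wstar_topology_def by (rule topology_generated_by_Basis) blast

lemma continuous_map_wstar_evaluation: "continuous_map wstar_topology euclideanreal (\<lambda>\<phi>. blinfun_apply \<phi> v)"
  unfolding continuous_map_def by (simp add: openin_wstar_evaluation)

lemma continuous_map_into_wstar_iff:
  "continuous_map X wstar_topology f \<longleftrightarrow> (\<forall>v. continuous_map X euclideanreal (\<lambda>x. blinfun_apply (f x) v))"
proof
  assume "continuous_map X wstar_topology f"
  then show "\<forall>v. continuous_map X euclideanreal (\<lambda>x. blinfun_apply (f x) v)"
    using continuous_map_compose[OF _ continuous_map_wstar_evaluation] by (auto simp: o_def)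
next
  assume "\<forall>v. continuous_map X euclideanreal (\<lambda>x. blinfun_apply (f x) v)"
  then have "openin X {x \<in> topspace X. blinfun_apply (f x) v \<in> U}" if "open U" for v U
    using that by (simp add: continuous_map_def)
  then show "continuous_map X wstar_topology f"
    unfolding wstar_topology_def continuous_on_generated_topo_iff
    by (auto simp: vimage_def Int_def conj_commute intro!: exI[of _ UNIV])
qed

lemma openin_wstar_box:
  assumes "finite F"
  shows "openin wstar_topology (wstar_box k F e)"
proof -
  have "wstar_box k F e = (\<Inter>v\<in>F. {\<phi>. blinfun_apply \<phi> v \<in> ball (k v) e}) \<inter> topspace wstar_topology"
    by (auto simp: wstar_box_def dist_real_def abs_minus_commute)
  also have "openin wstar_topology \<dots>"
    using assms by (intro openin_INT openin_wstar_evaluation) auto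
  finally show ?thesis .
qed

lemma openin_wstar_contains_box:
  assumes "openin wstar_topology U" "k \<in> U"
  obtains F e where "finite F" "0 < e" "wstar_box k F e \<subseteq> U"
proof -
  have "generate_topology_on {{\<phi>. blinfun_apply \<phi> v \<in> V} | v V. open V} U"
    using assms(1) unfolding wstar_topology_def by (rule openin_topology_generated_by)
  then have "\<exists>F e. finite F \<and> 0 < e \<and> wstar_box k F e \<subseteq> U"
    using assms(2)
  proof (induction arbitrary: k)
    case Empty
    then show ?case by simp
  next
    case (Int A B)
    then have "k \<in> A" "k \<in> B" by auto
    obtain F e where F: "finite F" "0 < e" "wstar_box k F e \<subseteq> A"
      using Int.IH(1)[OF \<open>k \<in> A\<close>] by blast
    obtain G d where G: "finite G" "0 < d" "wstar_box k G d \<subseteq> B"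
      using Int.IH(2)[OF \<open>k \<in> B\<close>] by blast
    have "wstar_box k (F \<union> G) (min e d) \<subseteq> A \<inter> B"
      using F(3) G(3) wstar_box_mono[of F "F \<union> G" "min e d" e k]
        wstar_box_mono[of G "F \<union> G" "min e d" d k] by auto
    then show ?case
      using F G by (intro exI[of _ "F \<union> G"] exI[of _ "min e d"]) auto
  next
    case (UN K)
    then obtain T where "T \<in> K" "k \<in> T" by blast
    then obtain F e where "finite F" "0 < e" "wstar_box k F e \<subseteq> T"
      using UN.IH by blast
    then show ?case using \<open>T \<in> K\<close> by blast
  next
    case (Basis S)
    then obtain v V where S: "S = {\<phi>. blinfun_apply \<phi> v \<in> V}" "open V" by blast
    with Basis.prems have "blinfun_apply k v \<in> V" by simp
    with \<open>open V\<close> obtain e where "0 < e" "ball (blinfun_apply k v) e \<subseteq> V"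
      by (rule openE)
    have "wstar_box k {v} e \<subseteq> S"
    proof
      fix \<phi> assume "\<phi> \<in> wstar_box k {v} e"
      then have "blinfun_apply \<phi> v \<in> ball (blinfun_apply k v) e"
        by (simp add: wstar_box_def dist_real_def abs_minus_commute)
      then show "\<phi> \<in> S" using \<open>ball (blinfun_apply k v) e \<subseteq> V\<close> S(1) by blast
    qed
    then show ?case using \<open>0 < e\<close> by blast
  qed
  then obtain F e where "finite F" "0 < e" "wstar_box k F e \<subseteq> U" by blast
  then show ?thesis by (rule that)
qed

lemma compactin_wstar_bdd_above:
  "compactin wstar_topology K \<Longrightarrow> bdd_above ((\<lambda>\<phi>. blinfun_apply \<phi> v) ` K)"
  using image_compactin[OF _ continuous_map_wstar_evaluation]
  by (metis compactin_euclidean_iff compact_imp_bounded bounded_imp_bdd_above)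

lemma closedin_wstar_kernel: "closedin wstar_topology {\<phi>. blinfun_apply \<phi> v = 0}"
  using closedin_continuous_map_preimage[OF continuous_map_wstar_evaluation, of "{0}" v] by simp

lemma compactin_wstar_translate:
  "compactin wstar_topology K \<Longrightarrow> compactin wstar_topology ((\<lambda>\<phi>. \<phi> + y) ` K)"
  by (erule image_compactin)
    (simp add: continuous_map_into_wstar_iff blinfun.add_left continuous_map_add
      continuous_map_wstar_evaluation)

lemma compactin_wstar_reflect:
  "compactin wstar_topology K \<Longrightarrow> compactin wstar_topology ((\<lambda>\<psi>. - x - \<psi>) ` K)"
  by (erule image_compactin)
    (simp add: continuous_map_into_wstar_iff blinfun.diff_left blinfun.minus_left continuous_map_diff
      continuous_map_wstar_evaluation)

lemma continuous_map_wstar_evaluation_comp: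
  "continuous_map X wstar_topology f \<Longrightarrow> continuous_map X euclideanreal (\<lambda>x. blinfun_apply (f x) v)"
  using continuous_map_into_wstar_iff by blast

lemma msumI: "a \<in> A \<Longrightarrow> b \<in> B \<Longrightarrow> a + b \<in> msum A B"
  unfolding msum_def by blast

lemma msumE:
  assumes "x \<in> msum A B"
  obtains a b where "a \<in> A" "b \<in> B" "x = a + b"
  using assms unfolding msum_def by blast

lemma compactin_wstar_msum:
  assumes "compactin wstar_topology A" "compactin wstar_topology B"
  shows "compactin wstar_topology (msum A B)"
proof -
  have msum_eq: "msum A B = (\<lambda>z. fst z + snd z) ` (A \<times> B)"
    unfolding msum_def by force
  have "continuous_map (prod_topology wstar_topology wstar_topology) wstar_topology (\<lambda>z. fst z + snd z)"
    unfolding continuous_map_into_wstar_iff blinfun.add_left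
    by (intro allI continuous_map_add continuous_map_wstar_evaluation_comp continuous_map_fst continuous_map_snd)
  moreover have "compactin (prod_topology wstar_topology wstar_topology) (A \<times> B)"
    using assms by (simp add: compactin_Times)
  ultimately show ?thesis
    unfolding msum_eq by (rule image_compactin[rotated])
qed

lemma convex_hull_Un_eq_segments:
  fixes A B :: "'a::real_vector set"
  assumes "convex A" "convex B" "A \<noteq> {}" "B \<noteq> {}"
  shows "convex hull (A \<union> B) = (\<lambda>(t, a, b). (1 - t) *\<^sub>R a + t *\<^sub>R b) ` ({0..1} \<times> A \<times> B)"
    (is "_ = ?seg")
proof
  show "?seg \<subseteq> convex hull (A \<union> B)"
  proof clarify
    fix t :: real and a b assume "t \<in> {0..1}" "a \<in> A" "b \<in> B"
    then show "(1 - t) *\<^sub>R a + t *\<^sub>R b \<in> convex hull (A \<union> B)"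
      by (intro convexD_alt[OF convex_convex_hull]) (auto intro: hull_inc)
  qed
next
  define S where "S i = (if i then B else A)" for i
  have "A \<union> B = \<Union>(S ` UNIV)"
    by (auto simp: S_def UNIV_bool)
  then have "convex hull (A \<union> B) = {\<Sum>i\<in>UNIV. c i *\<^sub>R s i | c s. (\<forall>i\<in>UNIV. 0 \<le> c i) \<and> sum c UNIV = 1 \<and> (\<forall>i\<in>UNIV. s i \<in> S i)}"
    using convex_hull_finite_union[of UNIV S] assms by (simp add: S_def)
  also have "\<dots> \<subseteq> ?seg"
  proof clarify
    fix c :: "bool \<Rightarrow> real" and s
    assume c: "\<forall>i\<in>UNIV. 0 \<le> c i" "sum c UNIV = 1" and s: "\<forall>i\<in>UNIV. s i \<in> S i"
    have "c False = 1 - c True" "0 \<le> c False" "0 \<le> c True"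
      using c by (simp_all add: UNIV_bool)
    moreover have "s False \<in> A" "s True \<in> B"
      using s[rule_format, of False] s[rule_format, of True] by (simp_all add: S_def)
    ultimately show "(\<Sum>i\<in>UNIV. c i *\<^sub>R s i) \<in> ?seg"
      by (intro image_eqI[of _ _ "(c True, s False, s True)"]) (auto simp: UNIV_bool)
  qed
  finally show "convex hull (A \<union> B) \<subseteq> ?seg" .
qed

lemma compactin_wstar_convex_hull_Un:
  assumes "compactin wstar_topology A" "compactin wstar_topology B" "convex A" "convex B"
  shows "compactin wstar_topology (convex hull (A \<union> B))"
proof (cases "A = {} \<or> B = {}")
  case True
  then show ?thesis using assms by (auto simp: hull_same)
next
  case False
  then have "A \<noteq> {}" "B \<noteq> {}" by auto
  let ?W = "wstar_topology :: ('a \<Rightarrow>\<^sub>L real) topology"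
  have "continuous_map (prod_topology euclideanreal (prod_topology ?W ?W)) ?W
      (\<lambda>z. (1 - fst z) *\<^sub>R fst (snd z) + fst z *\<^sub>R snd (snd z))"
    unfolding continuous_map_into_wstar_iff blinfun.add_left blinfun.scaleR_left real_scaleR_def
    by (intro allI continuous_map_add continuous_map_real_mult continuous_map_diff
        continuous_map_canonical_const continuous_map_fst continuous_map_wstar_evaluation_comp
        continuous_map_compose[OF continuous_map_snd continuous_map_fst, unfolded o_def]
        continuous_map_compose[OF continuous_map_snd continuous_map_snd, unfolded o_def])
  moreover have "compactin (prod_topology euclideanreal (prod_topology ?W ?W)) ({0..1} \<times> A \<times> B)"
    using assms by (simp add: compactin_Times)
  ultimately show ?thesis
    unfolding convex_hull_Un_eq_segments[OF assms(3,4) \<open>A \<noteq> {}\<close> \<open>B \<noteq> {}\<close>] case_prod_beta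
    by (rule image_compactin[rotated])
qed

lemma compactin_wstar_convex_hull_UN:
  assumes "finite J" "\<forall>j\<in>J. compactin wstar_topology (E j) \<and> convex (E j)"
  shows "compactin wstar_topology (convex hull (\<Union>j\<in>J. E j))"
  using assms
proof (induction J rule: finite_induct)
  case empty
  then show ?case by simp
next
  case (insert a J)
  have "convex hull (\<Union>j\<in>insert a J. E j) = convex hull (E a \<union> convex hull (\<Union>j\<in>J. E j))"
    unfolding UN_insert by (rule hull_Un_right)
  moreover have "compactin wstar_topology (convex hull (\<Union>j\<in>J. E j))"
    using insert by blast
  ultimately show ?case
    using insert.prems by (simp only:) (intro compactin_wstar_convex_hull_Un convex_convex_hull; simp)
qed

section \<open>Support functions and weak* separation\<close>

lemma supp_le_iff:
  assumes "compactin wstar_topology S" "S \<noteq> {}"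
  shows "supp S v \<le> r \<longleftrightarrow> (\<forall>\<phi>\<in>S. blinfun_apply \<phi> v \<le> r)"
  unfolding supp_def using assms by (intro cSUP_le_iff compactin_wstar_bdd_above)

lemma supp_less_iff:
  assumes "compactin wstar_topology S" "S \<noteq> {}"
  shows "supp S v < r \<longleftrightarrow> (\<forall>\<phi>\<in>S. blinfun_apply \<phi> v < r)"
proof -
  let ?V = "(\<lambda>\<phi>. blinfun_apply \<phi> v) ` S"
  have "compact ?V"
    using image_compactin[OF assms(1) continuous_map_wstar_evaluation] by simp
  then have "supp S v \<in> ?V"
    unfolding supp_def using assms(2) compactin_wstar_bdd_above[OF assms(1), of v]
    by (intro closed_contains_Sup compact_imp_closed) auto
  moreover have "blinfun_apply \<phi> v \<le> supp S v" if "\<phi> \<in> S" for \<phi>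
    unfolding supp_def using assms(1) that by (intro cSUP_upper compactin_wstar_bdd_above)
  ultimately show ?thesis by fastforce
qed

lemma supp_translate_le_iff:
  "compactin wstar_topology L \<Longrightarrow> L \<noteq> {} \<Longrightarrow>
    supp ((\<lambda>\<phi>. \<phi> + y) ` L) v \<le> r \<longleftrightarrow> (\<forall>a\<in>L. a v + y v \<le> r)"
  by (simp add: supp_le_iff compactin_wstar_translate blinfun.add_left)

lemma supp_translate_less_iff:
  "compactin wstar_topology L \<Longrightarrow> L \<noteq> {} \<Longrightarrow>
    supp ((\<lambda>\<phi>. \<phi> + y) ` L) v < r \<longleftrightarrow> (\<forall>a\<in>L. a v + y v < r)"
  by (simp add: supp_less_iff compactin_wstar_translate blinfun.add_left)

lemma supp_reflect_le_iff:
  "compactin wstar_topology U \<Longrightarrow> U \<noteq> {} \<Longrightarrow>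
    supp ((\<lambda>\<psi>. - x - \<psi>) ` U) v \<le> r \<longleftrightarrow> (\<forall>b\<in>U. - x v - b v \<le> r)"
  by (simp add: supp_le_iff compactin_wstar_reflect blinfun.diff_left blinfun.minus_left)

lemma supp_reflect_less_iff:
  "compactin wstar_topology U \<Longrightarrow> U \<noteq> {} \<Longrightarrow>
    supp ((\<lambda>\<psi>. - x - \<psi>) ` U) v < r \<longleftrightarrow> (\<forall>b\<in>U. - x v - b v < r)"
  by (simp add: supp_less_iff compactin_wstar_reflect blinfun.diff_left blinfun.minus_left)

lemma compactin_pointwise_subcover:
  assumes "compactin X K" "\<And>k. k \<in> K \<Longrightarrow> openin X (N k) \<and> k \<in> N k"
  obtains K' where "finite K'" "K' \<subseteq> K" "K \<subseteq> \<Union>(N ` K')"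
proof -
  have "(\<forall>B\<in>N ` K. openin X B) \<and> K \<subseteq> \<Union>(N ` K)"
    using assms(2) by blast
  then obtain \<C> where "finite \<C>" "\<C> \<subseteq> N ` K" "K \<subseteq> \<Union>\<C>"
    using assms(1)[unfolded compactin_def, THEN conjunct2, rule_format, of "N ` K"] by blast
  then show ?thesis
    using finite_subset_image[of \<C> N K] that by blast
qed

lemma wstar_compact_uniform_gap:
  fixes K S :: "('a::real_normed_vector \<Rightarrow>\<^sub>L real) set"
  assumes K: "compactin wstar_topology K" "K \<noteq> {}"
    and disj: "K \<inter> wstar_topology closure_of S = {}"
  obtains F e where "finite F" "0 < e" "\<And>s k. s \<in> S \<Longrightarrow> k \<in> K \<Longrightarrow> \<exists>v\<in>F. e \<le> \<bar>s v - k v\<bar>"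
proof -
  have "\<exists>F e. finite F \<and> 0 < e \<and> wstar_box k F e \<inter> S = {}" if "k \<in> K" for k
  proof -
    have "k \<notin> wstar_topology closure_of S" using disj that by blast
    then obtain U where U: "openin wstar_topology U" "k \<in> U" "U \<inter> S = {}"
      by (auto simp: in_closure_of)
    obtain F e where "finite F" "0 < e" "wstar_box k F e \<subseteq> U"
      using U(1,2) by (rule openin_wstar_contains_box)
    then show ?thesis using U(3) by blast
  qed
  then obtain FF ee where FE: "\<And>k. k \<in> K \<Longrightarrow> finite (FF k) \<and> 0 < ee k \<and> wstar_box k (FF k) (ee k) \<inter> S = {}"
    by metis
  define N where "N k = wstar_box k (FF k) (ee k / 2)" for k
  have N: "openin wstar_topology (N k) \<and> k \<in> N k" if "k \<in> K" for k
  proof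
    show "openin wstar_topology (N k)"
      unfolding N_def using FE[OF that] by (intro openin_wstar_box) blast
    show "k \<in> N k"
      using FE[OF that] by (simp add: N_def wstar_box_def)
  qed
  obtain K' where K': "finite K'" "K' \<subseteq> K" "K \<subseteq> \<Union>(N ` K')"
    using K(1) N by (rule compactin_pointwise_subcover)
  with K(2) have "K' \<noteq> {}" by auto
  define e where "e = Min ((\<lambda>k. ee k / 2) ` K')"
  have e_pos: "0 < e"
    using K' \<open>K' \<noteq> {}\<close> FE by (auto simp: e_def Min_gr_iff)
  have e_le: "e \<le> ee k / 2" if "k \<in> K'" for k
    unfolding e_def using K'(1) that by (intro Min_le) auto
  show ?thesis
  proof (rule that[of "\<Union>k\<in>K'. FF k" e])
    show "finite (\<Union>k\<in>K'. FF k)" using K' FE by blast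
    show "0 < e" by (rule e_pos)
  next
    fix s k assume "s \<in> S" "k \<in> K"
    then obtain k' where "k' \<in> K'" "k \<in> N k'" using K'(3) by blast
    show "\<exists>v\<in>\<Union>k\<in>K'. FF k. e \<le> \<bar>s v - k v\<bar>"
    proof (rule ccontr)
      assume near: "\<not> ?thesis"
      have "\<bar>s v - k' v\<bar> < ee k'" if "v \<in> FF k'" for v
      proof -
        have "\<bar>s v - k v\<bar> < e" using near that \<open>k' \<in> K'\<close> by force
        moreover have "\<bar>k v - k' v\<bar> < ee k' / 2"
          using \<open>k \<in> N k'\<close> that by (simp add: N_def wstar_box_def)
        ultimately show ?thesis using e_le[OF \<open>k' \<in> K'\<close>] by linarith
      qed
      then have "s \<in> wstar_box k' (FF k') (ee k') \<inter> S"
        using \<open>s \<in> S\<close> by (simp add: wstar_box_def)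
      then show False using FE \<open>k' \<in> K'\<close> K'(2) by blast
    qed
  qed
qed

text \<open>Weak* compactness leaves finitely many evaluation points at which \<open>S\<close> and \<open>K\<close> stay uniformly
  apart; separating in these coordinates yields a functional on the dual that is evaluation at a
  point of the space.\<close>

lemma wstar_separation:
  fixes K S :: "('a::real_normed_vector \<Rightarrow>\<^sub>L real) set"
  assumes K: "compactin wstar_topology K" "convex K" and S: "subspace S"
    and disj: "K \<inter> wstar_topology closure_of S = {}"
  obtains w where "\<And>s. s \<in> S \<Longrightarrow> s w = 0" "\<And>k. k \<in> K \<Longrightarrow> k w < 0"
proof (cases "K = {}")
  case True
  then show ?thesis by (intro that[of 0]) (simp_all add: blinfun.zero_right)
next
  case False
  then obtain k0 where "k0 \<in> K" by blast
  obtain F e where F: "finite F" "0 < e" and gap: "\<And>s k. s \<in> S \<Longrightarrow> k \<in> K \<Longrightarrow> \<exists>v\<in>F. e \<le> \<bar>s v - k v\<bar>"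
    using wstar_compact_uniform_gap[OF K(1) False disj] by blast
  define D where "D = (\<Union>s\<in>S. \<Union>k\<in>K. {s - k})"
  have "\<exists>v\<in>(\<lambda>v. (1 / e) *\<^sub>R v) ` F. 1 \<le> \<bar>d v\<bar>" if "d \<in> D" for d
  proof -
    obtain s k where "s \<in> S" "k \<in> K" "d = s - k" using \<open>d \<in> D\<close> by (auto simp: D_def)
    then obtain v where "v \<in> F" "e \<le> \<bar>d v\<bar>" using gap by (auto simp: blinfun.diff_left)
    then show ?thesis using F(2)
      by (intro bexI[of _ "(1 / e) *\<^sub>R v"]) (auto simp: blinfun.scaleR_right abs_mult)
  qed
  moreover have "convex D"
    unfolding D_def by (rule convex_differences[OF subspace_imp_convex[OF S] K(2)])
  ultimately obtain w where w: "\<And>d. d \<in> D \<Longrightarrow> 1 \<le> d w"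
    using uniform_gap_separation[of "(\<lambda>v. (1 / e) *\<^sub>R v) ` F" D] F(1) by blast
  have k_neg: "k w \<le> -1" if "k \<in> K" for k
  proof -
    have "0 - k \<in> D" unfolding D_def using that subspace_0[OF S] by blast
    then have "1 \<le> (0 - k) w" by (rule w)
    then show ?thesis by (simp add: blinfun.minus_left)
  qed
  show ?thesis
  proof (rule that)
    fix s assume "s \<in> S"
    show "s w = 0"
    proof (rule ccontr)
      assume "s w \<noteq> 0"
      define t where "t = k0 w / s w"
      have "t *\<^sub>R s - k0 \<in> D"
        unfolding D_def using \<open>s \<in> S\<close> \<open>k0 \<in> K\<close> subspace_scale[OF S] by blast
      then have "1 \<le> (t *\<^sub>R s - k0) w" by (rule w)
      then show False
        using \<open>s w \<noteq> 0\<close> by (simp add: t_def blinfun.diff_left blinfun.scaleR_left)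
    qed
  next
    show "k w < 0" if "k \<in> K" for k using k_neg[OF that] by simp
  qed
qed

lemma wstar_closure_span_subset_kernel:
  assumes "\<forall>\<phi>\<in>T. blinfun_apply \<phi> v = 0"
  shows "wstar_topology closure_of span T \<subseteq> {\<phi>. blinfun_apply \<phi> v = 0}"
proof (rule closure_of_minimal[OF span_minimal closedin_wstar_kernel])
  show "T \<subseteq> {\<phi>. blinfun_apply \<phi> v = 0}" using assms by blast
  show "subspace {\<phi>::'a \<Rightarrow>\<^sub>L real. blinfun_apply \<phi> v = 0}"
    by (simp add: subspace_def blinfun.zero_left blinfun.add_left blinfun.scaleR_left)
qed

lemma disjoint_wstar_closure_span_iff:
  fixes K T :: "('a::real_normed_vector \<Rightarrow>\<^sub>L real) set"
  assumes "compactin wstar_topology K" "convex K"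
  shows "K \<inter> wstar_topology closure_of span T = {} \<longleftrightarrow>
    (\<exists>v. (\<forall>\<phi>\<in>T. blinfun_apply \<phi> v = 0) \<and> (\<forall>\<phi>\<in>K. blinfun_apply \<phi> v < 0))"
proof
  assume "K \<inter> wstar_topology closure_of span T = {}"
  then obtain w where "\<And>s. s \<in> span T \<Longrightarrow> s w = 0" "\<And>k. k \<in> K \<Longrightarrow> k w < 0"
    using wstar_separation[OF assms subspace_span] by blast
  then show "\<exists>v. (\<forall>\<phi>\<in>T. blinfun_apply \<phi> v = 0) \<and> (\<forall>\<phi>\<in>K. blinfun_apply \<phi> v < 0)"
    using span_superset by blast
next
  assume "\<exists>v. (\<forall>\<phi>\<in>T. blinfun_apply \<phi> v = 0) \<and> (\<forall>\<phi>\<in>K. blinfun_apply \<phi> v < 0)"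
  then obtain v where "\<forall>\<phi>\<in>T. blinfun_apply \<phi> v = 0" "\<forall>\<phi>\<in>K. blinfun_apply \<phi> v < 0" by blast
  then show "K \<inter> wstar_topology closure_of span T = {}"
    using wstar_closure_span_subset_kernel by fastforce
qed

lemma convex_blinfun_negative:
  "convex {\<phi>::'a::real_normed_vector \<Rightarrow>\<^sub>L real. blinfun_apply \<phi> v < 0}"
proof -
  have "convex ((\<lambda>\<phi>::'a \<Rightarrow>\<^sub>L real. blinfun_apply \<phi> v) -` {..<0})"
    by (rule convex_linear_vimage[OF bounded_linear.linear[OF blinfun.bounded_linear_left]]) simp
  then show ?thesis by (simp add: vimage_def)
qed

section \<open>The conditions of the proposition\<close>

definition nonempty_convex_wstar_compact :: "('a::real_normed_vector \<Rightarrow>\<^sub>L real) set \<Rightarrow> bool" where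
  "nonempty_convex_wstar_compact S \<longleftrightarrow> S \<noteq> {} \<and> convex S \<and> compactin wstar_topology S"

lemma is_quasidiff_imp_nonempty_convex_wstar_compact:
  "is_quasidiff f x L U \<Longrightarrow> nonempty_convex_wstar_compact L \<and> nonempty_convex_wstar_compact U"
  by (simp add: is_quasidiff_def nonempty_convex_wstar_compact_def)

lemma nonempty_convex_wstar_compact_msum:
  assumes "nonempty_convex_wstar_compact L" "nonempty_convex_wstar_compact U"
  shows "nonempty_convex_wstar_compact (msum L U)"
proof -
  have "msum L U = (\<Union>a\<in>L. \<Union>b\<in>U. {a + b})"
    unfolding msum_def by blast
  then show ?thesis
    using assms convex_sums[of L U] compactin_wstar_msum[of L U]
    by (auto simp: nonempty_convex_wstar_compact_def)
qed

definition strongly_independent :: "'i set \<Rightarrow> ('i \<Rightarrow> 'v::real_vector set) \<Rightarrow> bool" where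
  "strongly_independent I A \<longleftrightarrow> (\<forall>i\<in>I. A i \<inter> span (\<Union>k\<in>I - {i}. A k) = {})"

definition wstar_strongly_independent ::
    "'i set \<Rightarrow> ('i \<Rightarrow> ('a::real_normed_vector \<Rightarrow>\<^sub>L real) set) \<Rightarrow> bool" where
  "wstar_strongly_independent I A \<longleftrightarrow>
     (\<forall>i\<in>I. A i \<inter> wstar_topology closure_of span (\<Union>k\<in>I - {i}. A k) = {})"

lemma wstar_strongly_independent_iff:
  assumes "\<forall>i\<in>I. closedin wstar_topology (span (\<Union>k\<in>I - {i}. A k))"
  shows "wstar_strongly_independent I A \<longleftrightarrow> strongly_independent I A"
  using assms by (simp add: wstar_strongly_independent_def strongly_independent_def closure_of_closedin)

lemma disjoint_convex_hull_wstar_closure_span_iff: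
  fixes E :: "'j \<Rightarrow> ('a::real_normed_vector \<Rightarrow>\<^sub>L real) set"
  assumes "finite J" "\<forall>j\<in>J. compactin wstar_topology (E j) \<and> convex (E j)"
  shows "convex hull (\<Union>j\<in>J. E j) \<inter> wstar_topology closure_of span (\<Union>i\<in>I. D i) = {} \<longleftrightarrow>
    (\<exists>v. (\<forall>i\<in>I. \<forall>\<phi>\<in>D i. blinfun_apply \<phi> v = 0) \<and> (\<forall>j\<in>J. \<forall>\<phi>\<in>E j. blinfun_apply \<phi> v < 0))"
proof -
  have "(\<forall>\<phi>\<in>convex hull (\<Union>j\<in>J. E j). blinfun_apply \<phi> v < 0) \<longleftrightarrow> (\<forall>j\<in>J. \<forall>\<phi>\<in>E j. blinfun_apply \<phi> v < 0)"
    for v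
    using hull_minimal[of "\<Union>j\<in>J. E j" "{\<phi>. blinfun_apply \<phi> v < 0}" convex]
      convex_blinfun_negative[of v] hull_subset[of "\<Union>j\<in>J. E j" convex]
    by blast
  then show ?thesis
    using assms
    by (simp add: disjoint_wstar_closure_span_iff compactin_wstar_convex_hull_UN convex_convex_hull)
qed

definition condition_Q ::
    "'i set \<Rightarrow> 'j set \<Rightarrow> ('i \<Rightarrow> ('a::real_normed_vector \<Rightarrow>\<^sub>L real) set) \<Rightarrow> ('i \<Rightarrow> ('a \<Rightarrow>\<^sub>L real) set) \<Rightarrow>
      ('j \<Rightarrow> ('a \<Rightarrow>\<^sub>L real) set) \<Rightarrow> ('i \<Rightarrow> 'a \<Rightarrow>\<^sub>L real) \<Rightarrow> ('i \<Rightarrow> 'a \<Rightarrow>\<^sub>L real) \<Rightarrow>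
      ('j \<Rightarrow> 'a \<Rightarrow>\<^sub>L real) \<Rightarrow> bool" where
  "condition_Q I J L U G x y z \<longleftrightarrow>
     (\<forall>i\<in>I. \<exists>v. supp ((\<lambda>\<phi>. \<phi> + y i) ` L i) v < 0 \<and>
        (\<forall>k\<in>I - {i}. supp ((\<lambda>\<phi>. \<phi> + y k) ` L k) v \<le> 0 \<and> supp ((\<lambda>\<psi>. - x k - \<psi>) ` U k) v \<le> 0)) \<and>
     (\<forall>i\<in>I. \<exists>w. supp ((\<lambda>\<psi>. - x i - \<psi>) ` U i) w < 0 \<and>
        (\<forall>k\<in>I - {i}. supp ((\<lambda>\<psi>. - x k - \<psi>) ` U k) w \<le> 0 \<and> supp ((\<lambda>\<phi>. \<phi> + y k) ` L k) w \<le> 0)) \<and>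
     (\<exists>v0. (\<forall>j\<in>J. supp ((\<lambda>\<phi>. \<phi> + z j) ` G j) v0 < 0) \<and>
        (\<forall>i\<in>I. supp ((\<lambda>\<phi>. \<phi> + y i) ` L i) v0 \<le> 0 \<and> supp ((\<lambda>\<psi>. - x i - \<psi>) ` U i) v0 \<le> 0))"

lemma supp_pair_nonpos_iff:
  assumes "nonempty_convex_wstar_compact L" "nonempty_convex_wstar_compact U"
  shows "supp ((\<lambda>\<phi>. \<phi> + y) ` L) w \<le> 0 \<and> supp ((\<lambda>\<psi>. - x - \<psi>) ` U) w \<le> 0 \<longleftrightarrow>
    (\<forall>a\<in>L. a w + y w \<le> 0) \<and> (\<forall>b\<in>U. - x w - b w \<le> 0)"
  using assms by (simp add: supp_translate_le_iff supp_reflect_le_iff nonempty_convex_wstar_compact_def)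

lemma supp_nonpos_if_annihilates_msum:
  assumes "nonempty_convex_wstar_compact L" "nonempty_convex_wstar_compact U" "x \<in> L" "y \<in> U"
    and "\<forall>\<phi>\<in>msum L U. blinfun_apply \<phi> w = 0"
  shows "supp ((\<lambda>\<phi>. \<phi> + y) ` L) w \<le> 0 \<and> supp ((\<lambda>\<psi>. - x - \<psi>) ` U) w \<le> 0"
proof -
  have "a w + y w \<le> 0" if "a \<in> L" for a
  proof -
    have "a + y \<in> msum L U" using that assms(4) by (rule msumI)
    then have "blinfun_apply (a + y) w = 0" using assms(5) by blast
    then show ?thesis by (simp add: blinfun.add_left)
  qed
  moreover have "- x w - b w \<le> 0" if "b \<in> U" for b
  proof -
    have "x + b \<in> msum L U" using assms(3) that by (rule msumI)
    then have "blinfun_apply (x + b) w = 0" using assms(5) by blast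
    then show ?thesis by (simp add: blinfun.add_left)
  qed
  ultimately show ?thesis
    using supp_pair_nonpos_iff[OF assms(1,2)] by blast
qed

lemma supp_translate_neg_if_msum_neg:
  assumes "nonempty_convex_wstar_compact L" "y \<in> U" "\<forall>\<phi>\<in>msum L U. blinfun_apply \<phi> v < 0"
  shows "supp ((\<lambda>\<phi>. \<phi> + y) ` L) v < 0"
proof -
  have "a v + y v < 0" if "a \<in> L" for a
  proof -
    have "a + y \<in> msum L U" using that assms(2) by (rule msumI)
    then have "blinfun_apply (a + y) v < 0" using assms(3) by blast
    then show ?thesis by (simp add: blinfun.add_left)
  qed
  then show ?thesis
    using assms(1) by (simp add: supp_translate_less_iff nonempty_convex_wstar_compact_def)
qed

lemma supp_reflect_neg_if_msum_neg:
  assumes "nonempty_convex_wstar_compact U" "x \<in> L" "\<forall>\<phi>\<in>msum L U. blinfun_apply \<phi> v < 0"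
  shows "supp ((\<lambda>\<psi>. - x - \<psi>) ` U) (- v) < 0"
proof -
  have "- x (- v) - b (- v) < 0" if "b \<in> U" for b
  proof -
    have "x + b \<in> msum L U" using assms(2) that by (rule msumI)
    then have "blinfun_apply (x + b) v < 0" using assms(3) by blast
    then show ?thesis by (simp add: blinfun.add_left blinfun.minus_right)
  qed
  then show ?thesis
    using assms(1) by (simp add: supp_reflect_less_iff nonempty_convex_wstar_compact_def)
qed

lemma wstar_strongly_independent_separating_directions:
  assumes "wstar_strongly_independent I D" "\<forall>i\<in>I. compactin wstar_topology (D i) \<and> convex (D i)"
  shows "\<exists>v. \<forall>i\<in>I. (\<forall>k\<in>I - {i}. \<forall>\<phi>\<in>D k. blinfun_apply \<phi> (v i) = 0) \<and>
    (\<forall>\<phi>\<in>D i. blinfun_apply \<phi> (v i) < 0)"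
proof -
  have "\<exists>w. (\<forall>\<phi>\<in>(\<Union>k\<in>I - {i}. D k). blinfun_apply \<phi> w = 0) \<and> (\<forall>\<phi>\<in>D i. blinfun_apply \<phi> w < 0)"
    if "i \<in> I" for i
  proof -
    have "D i \<inter> wstar_topology closure_of span (\<Union>k\<in>I - {i}. D k) = {}"
      using assms(1) that by (simp add: wstar_strongly_independent_def)
    moreover have "compactin wstar_topology (D i)" "convex (D i)"
      using assms(2) that by auto
    ultimately show ?thesis
      by (simp only: disjoint_wstar_closure_span_iff)
  qed
  then show ?thesis
    by (intro bchoice ballI) auto
qed

lemma conditions_AB_imp_condition_Q:
  fixes L U :: "'i \<Rightarrow> ('a::real_normed_vector \<Rightarrow>\<^sub>L real) set"
  assumes J: "finite J"
    and LU: "\<forall>i\<in>I. nonempty_convex_wstar_compact (L i) \<and> nonempty_convex_wstar_compact (U i)"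
    and GH: "\<forall>j\<in>J. nonempty_convex_wstar_compact (G j) \<and> nonempty_convex_wstar_compact (H j)"
  shows "wstar_strongly_independent I (\<lambda>i. msum (L i) (U i)) \<and>
      convex hull (\<Union>j\<in>J. msum (G j) (H j)) \<inter> wstar_topology closure_of span (\<Union>i\<in>I. msum (L i) (U i)) = {}
    \<longrightarrow> (\<forall>x y z. (\<forall>i\<in>I. x i \<in> L i \<and> y i \<in> U i) \<longrightarrow> (\<forall>j\<in>J. z j \<in> H j) \<longrightarrow>
           condition_Q I J L U G x y z)"
    (is "?A \<and> ?B \<longrightarrow> _")
proof (intro allI impI)
  fix x y z assume "?A \<and> ?B"
    and xy: "\<forall>i\<in>I. x i \<in> L i \<and> y i \<in> U i" and z: "\<forall>j\<in>J. z j \<in> H j"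
  then have A: ?A and B: ?B by blast+
  have nonpos: "supp ((\<lambda>\<phi>. \<phi> + y k) ` L k) v \<le> 0 \<and> supp ((\<lambda>\<psi>. - x k - \<psi>) ` U k) v \<le> 0"
    if "k \<in> I" "\<forall>\<phi>\<in>msum (L k) (U k). blinfun_apply \<phi> v = 0" for k v
    using LU xy that by (intro supp_nonpos_if_annihilates_msum) auto
  have "\<forall>i\<in>I. compactin wstar_topology (msum (L i) (U i)) \<and> convex (msum (L i) (U i))"
    using LU nonempty_convex_wstar_compact_msum by (auto simp: nonempty_convex_wstar_compact_def)
  then obtain v where "\<forall>i\<in>I. (\<forall>k\<in>I - {i}. \<forall>\<phi>\<in>msum (L k) (U k). blinfun_apply \<phi> (v i) = 0) \<and>
      (\<forall>\<phi>\<in>msum (L i) (U i). blinfun_apply \<phi> (v i) < 0)"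
    using wstar_strongly_independent_separating_directions[OF A] by blast
  then have v: "\<And>i. i \<in> I \<Longrightarrow> \<forall>k\<in>I - {i}. \<forall>\<phi>\<in>msum (L k) (U k). blinfun_apply \<phi> (v i) = 0"
      "\<And>i. i \<in> I \<Longrightarrow> \<forall>\<phi>\<in>msum (L i) (U i). blinfun_apply \<phi> (v i) < 0"
    by blast+
  have Q1: "supp ((\<lambda>\<phi>. \<phi> + y i) ` L i) (v i) < 0" if "i \<in> I" for i
    using LU xy v(2)[OF that] that by (intro supp_translate_neg_if_msum_neg[of "L i" "y i" "U i"]) auto
  have Q2: "supp ((\<lambda>\<psi>. - x i - \<psi>) ` U i) (- v i) < 0" if "i \<in> I" for i
    using LU xy v(2)[OF that] that by (intro supp_reflect_neg_if_msum_neg[of "U i" "x i" "L i"]) auto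
  have v_neg: "\<forall>k\<in>I - {i}. \<forall>\<phi>\<in>msum (L k) (U k). blinfun_apply \<phi> (- v i) = 0" if "i \<in> I" for i
    using v(1)[OF that] by (simp add: blinfun.minus_right)
  have E: "\<forall>j\<in>J. compactin wstar_topology (msum (G j) (H j)) \<and> convex (msum (G j) (H j))"
    using GH nonempty_convex_wstar_compact_msum by (auto simp: nonempty_convex_wstar_compact_def)
  obtain v0 where v0: "\<forall>i\<in>I. \<forall>\<phi>\<in>msum (L i) (U i). blinfun_apply \<phi> v0 = 0"
      "\<forall>j\<in>J. \<forall>\<phi>\<in>msum (G j) (H j). blinfun_apply \<phi> v0 < 0"
    using B disjoint_convex_hull_wstar_closure_span_iff[OF J E, where I=I and D="\<lambda>i. msum (L i) (U i)"]
    by blast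
  have Q3: "supp ((\<lambda>\<phi>. \<phi> + z j) ` G j) v0 < 0" if "j \<in> J" for j
    using GH z v0(2) that by (intro supp_translate_neg_if_msum_neg[of "G j" "z j" "H j"]) auto
  show "condition_Q I J L U G x y z"
    unfolding condition_Q_def
  proof (intro conjI ballI)
    fix i assume i: "i \<in> I"
    show "\<exists>w. supp ((\<lambda>\<phi>. \<phi> + y i) ` L i) w < 0 \<and>
        (\<forall>k\<in>I - {i}. supp ((\<lambda>\<phi>. \<phi> + y k) ` L k) w \<le> 0 \<and> supp ((\<lambda>\<psi>. - x k - \<psi>) ` U k) w \<le> 0)"
      using Q1[OF i] v(1)[OF i] nonpos by (intro exI[of _ "v i"]) blast
    show "\<exists>w. supp ((\<lambda>\<psi>. - x i - \<psi>) ` U i) w < 0 \<and>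
        (\<forall>k\<in>I - {i}. supp ((\<lambda>\<psi>. - x k - \<psi>) ` U k) w \<le> 0 \<and> supp ((\<lambda>\<phi>. \<phi> + y k) ` L k) w \<le> 0)"
      using Q2[OF i] v_neg[OF i] nonpos by (intro exI[of _ "- v i"]) blast
  next
    show "\<exists>w. (\<forall>j\<in>J. supp ((\<lambda>\<phi>. \<phi> + z j) ` G j) w < 0) \<and>
        (\<forall>i\<in>I. supp ((\<lambda>\<phi>. \<phi> + y i) ` L i) w \<le> 0 \<and> supp ((\<lambda>\<psi>. - x i - \<psi>) ` U i) w \<le> 0)"
      using Q3 v0(1) nonpos by (intro exI[of _ v0]) blast
  qed
qed

definition mean :: "'e set \<Rightarrow> ('e \<Rightarrow> 'v::real_vector) \<Rightarrow> 'v" where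
  "mean E c = (1 / real (card E)) *\<^sub>R (\<Sum>e\<in>E. c e)"

lemma mean_in_convex:
  assumes "finite E" "E \<noteq> {}" "convex C" "\<forall>e\<in>E. c e \<in> C"
  shows "mean E c \<in> C"
  unfolding mean_def scaleR_sum_right
  using assms by (intro convex_sum) (auto simp: card_gt_0_iff)

lemma blinfun_apply_mean:
  "blinfun_apply (mean E c) w = (\<Sum>e\<in>E. blinfun_apply (c e) w) / real (card E)"
  by (simp add: mean_def blinfun.scaleR_left blinfun.sum_left)

lemma sum_eq_card_mean:
  fixes c :: "'e \<Rightarrow> ('a::real_normed_vector \<Rightarrow>\<^sub>L real)"
  assumes "finite E" "E \<noteq> {}"
  shows "(\<Sum>e\<in>E. blinfun_apply (c e) w) = (\<Sum>e\<in>E. blinfun_apply (mean E c) w)"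
  using assms by (simp add: blinfun_apply_mean card_gt_0_iff)

text \<open>If the mean of the \<open>c e\<close> is a maximiser of \<open>L\<close> at \<open>w\<close>, every \<open>c e\<close> is one, and likewise
  for the minimisers of \<open>U\<close>.\<close>

lemma mean_selection_balanced:
  fixes c d :: "'e \<Rightarrow> ('a::real_normed_vector \<Rightarrow>\<^sub>L real)"
  assumes E: "finite E" "E \<noteq> {}" and LU: "convex L" "convex U" "\<forall>e\<in>E. c e \<in> L \<and> d e \<in> U"
    and L_le: "\<forall>a\<in>L. a w + mean E d w \<le> 0" and U_le: "\<forall>b\<in>U. - mean E c w - b w \<le> 0"
  shows "\<forall>e\<in>E. c e w + d e w = 0"
proof -
  have "mean E c \<in> L" "mean E d \<in> U"
    using LU E by (auto intro: mean_in_convex)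
  then have balance: "mean E c w + mean E d w = 0"
    using L_le U_le by fastforce
  have c_le: "c e w \<le> mean E c w" if "e \<in> E" for e
    using L_le LU(3) that balance by fastforce
  have d_ge: "mean E d w \<le> d e w" if "e \<in> E" for e
    using U_le LU(3) that balance by fastforce
  have "c e w = mean E c w" if "e \<in> E" for e
    using sum_mono_inv[OF sum_eq_card_mean[OF E] c_le that E(1)] .
  moreover have "mean E d w = d e w" if "e \<in> E" for e
    using sum_mono_inv[OF sum_eq_card_mean[OF E, symmetric] d_ge that E(1)] .
  ultimately show ?thesis using balance by force
qed

lemma span_msum_selection:
  fixes q :: "'a::real_normed_vector \<Rightarrow>\<^sub>L real"
  assumes LU: "\<forall>k\<in>A. convex (L k) \<and> convex (U k) \<and> L k \<noteq> {} \<and> U k \<noteq> {}"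
    and q: "q \<in> span (\<Union>k\<in>A. msum (L k) (U k))"
  obtains x y where "\<forall>k\<in>A. x k \<in> L k \<and> y k \<in> U k"
    and "\<And>w. \<forall>k\<in>A. (\<forall>a\<in>L k. a w + y k w \<le> 0) \<and> (\<forall>b\<in>U k. - x k w - b w \<le> 0) \<Longrightarrow> q w = 0"
proof -
  obtain S u where S: "finite S" "S \<subseteq> (\<Union>k\<in>A. msum (L k) (U k))" and q_eq: "q = (\<Sum>e\<in>S. u e *\<^sub>R e)"
    using q unfolding span_explicit by blast
  have "\<forall>e\<in>S. \<exists>k c d. k \<in> A \<and> c \<in> L k \<and> d \<in> U k \<and> e = c + d"
    using S(2) unfolding msum_def by blast
  then obtain \<kappa> c d where cd: "\<And>e. e \<in> S \<Longrightarrow> \<kappa> e \<in> A \<and> c e \<in> L (\<kappa> e) \<and> d e \<in> U (\<kappa> e) \<and> e = c e + d e"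
    by metis
  define E where "E k = {e\<in>S. \<kappa> e = k}" for k
  define x where "x k = (if E k = {} then SOME a. a \<in> L k else mean (E k) c)" for k
  define y where "y k = (if E k = {} then SOME b. b \<in> U k else mean (E k) d)" for k
  have E: "finite (E k)" "\<forall>e\<in>E k. c e \<in> L k \<and> d e \<in> U k" for k
    using S(1) cd by (auto simp: E_def)
  have "\<forall>k\<in>A. x k \<in> L k \<and> y k \<in> U k"
    using LU E by (auto simp: x_def y_def some_in_eq intro: mean_in_convex)
  moreover have "q w = 0" if w: "\<forall>k\<in>A. (\<forall>a\<in>L k. a w + y k w \<le> 0) \<and> (\<forall>b\<in>U k. - x k w - b w \<le> 0)" for w
  proof -
    have "e w = 0" if "e \<in> S" for e
    proof -
      let ?k = "\<kappa> e"
      have "e \<in> E ?k" "?k \<in> A" using that cd by (auto simp: E_def)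
      then have "x ?k = mean (E ?k) c" "y ?k = mean (E ?k) d" by (auto simp: x_def y_def)
      with w \<open>?k \<in> A\<close> have "\<forall>a\<in>L ?k. a w + mean (E ?k) d w \<le> 0"
        "\<forall>b\<in>U ?k. - mean (E ?k) c w - b w \<le> 0" by auto
      with E \<open>e \<in> E ?k\<close> \<open>?k \<in> A\<close> LU have "\<forall>e'\<in>E ?k. c e' w + d e' w = 0"
        by (intro mean_selection_balanced[of "E ?k" "L ?k" "U ?k"]) auto
      moreover have "e w = c e w + d e w"
        using cd[OF that] blinfun.add_left by metis
      ultimately show ?thesis using \<open>e \<in> E ?k\<close> by simp
    qed
    then show "q w = 0" unfolding q_eq by (simp add: blinfun.sum_left blinfun.scaleR_left)
  qed
  ultimately show ?thesis using that by blast
qed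

lemma condition_Q_imp_wstar_strongly_independent:
  fixes L U :: "'i \<Rightarrow> ('a::real_normed_vector \<Rightarrow>\<^sub>L real) set"
  assumes LU: "\<forall>i\<in>I. nonempty_convex_wstar_compact (L i) \<and> nonempty_convex_wstar_compact (U i)"
    and H: "\<forall>j\<in>J. nonempty_convex_wstar_compact (H j)"
    and closed: "\<forall>i\<in>I. closedin wstar_topology (span (\<Union>k\<in>I - {i}. msum (L k) (U k)))"
    and Q: "\<forall>x y z. (\<forall>i\<in>I. x i \<in> L i \<and> y i \<in> U i) \<longrightarrow> (\<forall>j\<in>J. z j \<in> H j) \<longrightarrow>
              condition_Q I J L U G x y z"
  shows "wstar_strongly_independent I (\<lambda>i. msum (L i) (U i))"
proof -
  have "msum (L i) (U i) \<inter> span (\<Union>k\<in>I - {i}. msum (L k) (U k)) = {}" if i: "i \<in> I" for i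
  proof (rule ccontr)
    assume "msum (L i) (U i) \<inter> span (\<Union>k\<in>I - {i}. msum (L k) (U k)) \<noteq> {}"
    then obtain a b where ab: "a \<in> L i" "b \<in> U i" "a + b \<in> span (\<Union>k\<in>I - {i}. msum (L k) (U k))"
      unfolding msum_def by blast
    have "\<forall>k\<in>I - {i}. convex (L k) \<and> convex (U k) \<and> L k \<noteq> {} \<and> U k \<noteq> {}"
      using LU by (simp add: nonempty_convex_wstar_compact_def)
    then obtain x0 y0 where xy0: "\<forall>k\<in>I - {i}. x0 k \<in> L k \<and> y0 k \<in> U k"
      and vanish: "\<And>w. \<forall>k\<in>I - {i}. (\<forall>a\<in>L k. a w + y0 k w \<le> 0) \<and> (\<forall>b\<in>U k. - x0 k w - b w \<le> 0)
                    \<Longrightarrow> blinfun_apply (a + b) w = 0"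
      using span_msum_selection[OF _ ab(3)] by blast
    let ?x = "x0(i := a)" and ?y = "y0(i := b)"
    have "\<forall>j\<in>J. (SOME c. c \<in> H j) \<in> H j"
      using H by (simp add: some_in_eq nonempty_convex_wstar_compact_def)
    moreover have "\<forall>k\<in>I. ?x k \<in> L k \<and> ?y k \<in> U k"
    proof
      fix k assume "k \<in> I"
      show "?x k \<in> L k \<and> ?y k \<in> U k"
      proof (cases "k = i")
        case True
        then show ?thesis using ab(1,2) by simp
      next
        case False
        then show ?thesis using xy0 \<open>k \<in> I\<close> by simp
      qed
    qed
    ultimately have "condition_Q I J L U G ?x ?y (\<lambda>j. SOME c. c \<in> H j)"
      by (intro Q[rule_format]) blast+
    then obtain v where v_i: "supp ((\<lambda>\<phi>. \<phi> + b) ` L i) v < 0"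
      and v_k: "\<forall>k\<in>I - {i}. supp ((\<lambda>\<phi>. \<phi> + y0 k) ` L k) v \<le> 0 \<and> supp ((\<lambda>\<psi>. - x0 k - \<psi>) ` U k) v \<le> 0"
      unfolding condition_Q_def using i by auto
    have "blinfun_apply (a + b) v = 0"
      using v_k LU by (intro vanish) (simp add: supp_pair_nonpos_iff)
    moreover have "blinfun_apply (a + b) v < 0"
      using v_i LU i ab(1)
      by (simp add: supp_translate_less_iff nonempty_convex_wstar_compact_def blinfun.add_left)
    ultimately show False by simp
  qed
  then show ?thesis
    using closed by (simp add: wstar_strongly_independent_def closure_of_closedin)
qed

lemma convex_hull_UN_msumE:
  assumes "finite J" "\<forall>j\<in>J. nonempty_convex_wstar_compact (G j) \<and> nonempty_convex_wstar_compact (H j)"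
    and "q \<in> convex hull (\<Union>j\<in>J. msum (G j) (H j))"
  obtains \<mu> c d where "q = (\<Sum>j\<in>J. \<mu> j *\<^sub>R (c j + d j))" "\<forall>j\<in>J. 0 \<le> \<mu> j" "sum \<mu> J = 1"
    "\<forall>j\<in>J. c j \<in> G j \<and> d j \<in> H j"
proof -
  have "\<forall>j\<in>J. nonempty_convex_wstar_compact (msum (G j) (H j))"
    using assms(2) by (simp add: nonempty_convex_wstar_compact_msum)
  then have "\<forall>j\<in>J. convex (msum (G j) (H j)) \<and> msum (G j) (H j) \<noteq> {}"
    by (simp add: nonempty_convex_wstar_compact_def)
  with assms(3) have "q \<in> {\<Sum>j\<in>J. \<mu> j *\<^sub>R s j | \<mu> s. (\<forall>j\<in>J. 0 \<le> \<mu> j) \<and> sum \<mu> J = 1 \<and>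
      (\<forall>j\<in>J. s j \<in> msum (G j) (H j))}"
    by (simp only: convex_hull_finite_union[OF assms(1)])
  then obtain \<mu> s where q: "q = (\<Sum>j\<in>J. \<mu> j *\<^sub>R s j)" "\<forall>j\<in>J. 0 \<le> \<mu> j" "sum \<mu> J = 1"
    and s: "\<forall>j\<in>J. s j \<in> msum (G j) (H j)"
    by blast
  define d where "d j = (SOME b. b \<in> H j \<and> s j - b \<in> G j)" for j
  have d: "d j \<in> H j \<and> s j - d j \<in> G j" if j: "j \<in> J" for j
  proof -
    have "s j \<in> msum (G j) (H j)" using s j by blast
    then obtain a b where "a \<in> G j" "b \<in> H j" "s j = a + b"
      by (rule msumE)
    then have "b \<in> H j \<and> s j - b \<in> G j" by simp
    then show ?thesis
      unfolding d_def by (rule someI[where P="\<lambda>b. b \<in> H j \<and> s j - b \<in> G j"])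
  qed
  show ?thesis
    using q d by (intro that[of \<mu> "\<lambda>j. s j - d j" d]) simp_all
qed

lemma condition_Q_imp_condition_B:
  fixes L U :: "'i \<Rightarrow> ('a::real_normed_vector \<Rightarrow>\<^sub>L real) set"
  assumes J: "finite J"
    and LU: "\<forall>i\<in>I. nonempty_convex_wstar_compact (L i) \<and> nonempty_convex_wstar_compact (U i)"
    and GH: "\<forall>j\<in>J. nonempty_convex_wstar_compact (G j) \<and> nonempty_convex_wstar_compact (H j)"
    and closed: "closedin wstar_topology (span (\<Union>i\<in>I. msum (L i) (U i)))"
    and Q: "\<forall>x y z. (\<forall>i\<in>I. x i \<in> L i \<and> y i \<in> U i) \<longrightarrow> (\<forall>j\<in>J. z j \<in> H j) \<longrightarrow>
              condition_Q I J L U G x y z"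
  shows "convex hull (\<Union>j\<in>J. msum (G j) (H j)) \<inter>
           wstar_topology closure_of span (\<Union>i\<in>I. msum (L i) (U i)) = {}"
proof -
  have "q \<notin> span (\<Union>i\<in>I. msum (L i) (U i))" if q_hull: "q \<in> convex hull (\<Union>j\<in>J. msum (G j) (H j))" for q
  proof
    assume q_span: "q \<in> span (\<Union>i\<in>I. msum (L i) (U i))"
    obtain \<mu> c d where q_eq: "q = (\<Sum>j\<in>J. \<mu> j *\<^sub>R (c j + d j))" and \<mu>: "\<forall>j\<in>J. 0 \<le> \<mu> j" "sum \<mu> J = 1"
      and cd: "\<forall>j\<in>J. c j \<in> G j \<and> d j \<in> H j"
      using J GH q_hull by (rule convex_hull_UN_msumE)
    have "\<forall>i\<in>I. convex (L i) \<and> convex (U i) \<and> L i \<noteq> {} \<and> U i \<noteq> {}"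
      using LU by (simp add: nonempty_convex_wstar_compact_def)
    then obtain x y where xy: "\<forall>i\<in>I. x i \<in> L i \<and> y i \<in> U i"
      and vanish: "\<And>w. \<forall>i\<in>I. (\<forall>a\<in>L i. a w + y i w \<le> 0) \<and> (\<forall>b\<in>U i. - x i w - b w \<le> 0) \<Longrightarrow> q w = 0"
      using span_msum_selection[OF _ q_span] by blast
    have "condition_Q I J L U G x y d"
      using xy cd by (intro Q[rule_format]) blast+
    then have "\<exists>v. (\<forall>j\<in>J. supp ((\<lambda>\<phi>. \<phi> + d j) ` G j) v < 0) \<and>
        (\<forall>i\<in>I. supp ((\<lambda>\<phi>. \<phi> + y i) ` L i) v \<le> 0 \<and> supp ((\<lambda>\<psi>. - x i - \<psi>) ` U i) v \<le> 0)"
      unfolding condition_Q_def by (elim conjE)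
    then obtain v where v_j: "\<forall>j\<in>J. supp ((\<lambda>\<phi>. \<phi> + d j) ` G j) v < 0"
      and v_i: "\<forall>i\<in>I. supp ((\<lambda>\<phi>. \<phi> + y i) ` L i) v \<le> 0 \<and> supp ((\<lambda>\<psi>. - x i - \<psi>) ` U i) v \<le> 0"
      by blast
    have "q v = 0"
      using v_i LU by (intro vanish) (simp add: supp_pair_nonpos_iff)
    moreover have "c j + d j \<in> {\<phi>. blinfun_apply \<phi> v < 0}" if "j \<in> J" for j
    proof -
      have "\<forall>a\<in>G j. a v + d j v < 0"
        using v_j GH that by (simp add: supp_translate_less_iff nonempty_convex_wstar_compact_def)
      then show ?thesis using cd that by (simp add: blinfun.add_left)
    qed
    then have "q \<in> {\<phi>. blinfun_apply \<phi> v < 0}"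
      unfolding q_eq using J \<mu> by (intro convex_sum convex_blinfun_negative) auto
    ultimately show False by simp
  qed
  then show ?thesis
    using closed by (auto simp: closure_of_closedin)
qed

lemma condition_Q_imp_conditions_AB:
  fixes L U :: "'i \<Rightarrow> ('a::real_normed_vector \<Rightarrow>\<^sub>L real) set"
  assumes J: "finite J"
    and LU: "\<forall>i\<in>I. nonempty_convex_wstar_compact (L i) \<and> nonempty_convex_wstar_compact (U i)"
    and GH: "\<forall>j\<in>J. nonempty_convex_wstar_compact (G j) \<and> nonempty_convex_wstar_compact (H j)"
  shows "(\<forall>i\<in>I. closedin wstar_topology (span (\<Union>k\<in>I - {i}. msum (L k) (U k)))) \<and>
      closedin wstar_topology (span (\<Union>i\<in>I. msum (L i) (U i)))
    \<longrightarrow> (\<forall>x y z. (\<forall>i\<in>I. x i \<in> L i \<and> y i \<in> U i) \<longrightarrow> (\<forall>j\<in>J. z j \<in> H j) \<longrightarrow>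
           condition_Q I J L U G x y z)
    \<longrightarrow> wstar_strongly_independent I (\<lambda>i. msum (L i) (U i)) \<and>
      convex hull (\<Union>j\<in>J. msum (G j) (H j)) \<inter> wstar_topology closure_of span (\<Union>i\<in>I. msum (L i) (U i)) = {}"
    (is "?closed1 \<and> ?closed2 \<longrightarrow> ?Q \<longrightarrow> ?A \<and> ?B")
proof (intro impI)
  assume closed: "?closed1 \<and> ?closed2" and Q: ?Q
  have "\<forall>j\<in>J. nonempty_convex_wstar_compact (H j)" using GH by blast
  then have ?A
    by (rule condition_Q_imp_wstar_strongly_independent[OF LU _ conjunct1[OF closed] Q])
  moreover have ?B
    by (rule condition_Q_imp_condition_B[OF J LU GH conjunct2[OF closed] Q])
  ultimately show "?A \<and> ?B" ..
qed

lemma conditions_AB_iff_MFCQ: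
  fixes L U :: "'i \<Rightarrow> ('a::real_normed_vector \<Rightarrow>\<^sub>L real) set"
  assumes J: "finite J"
    and GH: "\<forall>j\<in>J. nonempty_convex_wstar_compact (G j) \<and> nonempty_convex_wstar_compact (H j)"
  shows "(\<forall>i\<in>I. closedin wstar_topology (span (\<Union>k\<in>I - {i}. msum (L k) (U k)))) \<longrightarrow>
    (wstar_strongly_independent I (\<lambda>i. msum (L i) (U i)) \<and>
       convex hull (\<Union>j\<in>J. msum (G j) (H j)) \<inter> wstar_topology closure_of span (\<Union>i\<in>I. msum (L i) (U i)) = {}
     \<longleftrightarrow> strongly_independent I (\<lambda>i. msum (L i) (U i)) \<and>
       (\<exists>v0. (\<forall>i\<in>I. \<forall>\<phi>\<in>msum (L i) (U i). blinfun_apply \<phi> v0 = 0) \<and>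
             (\<forall>j\<in>J. \<forall>\<phi>\<in>msum (G j) (H j). blinfun_apply \<phi> v0 < 0)))"
    (is "?closed \<longrightarrow> (?A \<and> ?B \<longleftrightarrow> ?C)")
proof
  assume ?closed
  have "\<forall>j\<in>J. compactin wstar_topology (msum (G j) (H j)) \<and> convex (msum (G j) (H j))"
    using GH nonempty_convex_wstar_compact_msum unfolding nonempty_convex_wstar_compact_def by blast
  then show "?A \<and> ?B \<longleftrightarrow> ?C"
    using wstar_strongly_independent_iff[OF \<open>?closed\<close>]
      disjoint_convex_hull_wstar_closure_span_iff[OF J, where I=I and D="\<lambda>i. msum (L i) (U i)"]
    by simp
qed

theorem proposition2:
  fixes f g :: "nat \<Rightarrow> 'a::banach \<Rightarrow> real"
    and m l :: nat
    and xbar :: 'a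
    and Lf Uf Lg Ug :: "nat \<Rightarrow> ('a \<Rightarrow>\<^sub>L real) set"
  defines "I \<equiv> {1..m}"
    and "J0 \<equiv> {j \<in> {1..l}. g j xbar = 0}"
    and "Df \<equiv> \<lambda>i. msum (Lf i) (Uf i)"
    and "Dg \<equiv> \<lambda>j. msum (Lg j) (Ug j)"
  defines "condA \<equiv> (\<forall>i\<in>I. Df i \<inter>
              (wstar_topology closure_of span (\<Union>k\<in>I - {i}. Df k)) = {})"
    and "condB \<equiv> (convex hull (\<Union>j\<in>J0. Dg j) \<inter>
              (wstar_topology closure_of span (\<Union>i\<in>I. Df i)) = {})"
    and "condQ \<equiv> \<lambda>x y z.
          (\<forall>i\<in>I. \<exists>v. supp ((\<lambda>\<phi>. \<phi> + y i) ` Lf i) v < 0 \<and>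
              (\<forall>k\<in>I - {i}. supp ((\<lambda>\<phi>. \<phi> + y k) ` Lf k) v \<le> 0 \<and>
                             supp ((\<lambda>\<psi>. - x k - \<psi>) ` Uf k) v \<le> 0)) \<and>
          (\<forall>i\<in>I. \<exists>w. supp ((\<lambda>\<psi>. - x i - \<psi>) ` Uf i) w < 0 \<and>
              (\<forall>k\<in>I - {i}. supp ((\<lambda>\<psi>. - x k - \<psi>) ` Uf k) w \<le> 0 \<and>
                             supp ((\<lambda>\<phi>. \<phi> + y k) ` Lf k) w \<le> 0)) \<and>
          (\<exists>v0. (\<forall>j\<in>J0. supp ((\<lambda>\<phi>. \<phi> + z j) ` Lg j) v0 < 0) \<and>
              (\<forall>i\<in>I. supp ((\<lambda>\<phi>. \<phi> + y i) ` Lf i) v0 \<le> 0 \<and>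
                      supp ((\<lambda>\<psi>. - x i - \<psi>) ` Uf i) v0 \<le> 0))"
  defines "QforAll \<equiv> (\<forall>x y z. (\<forall>i\<in>I. x i \<in> Lf i \<and> y i \<in> Uf i) \<longrightarrow>
                            (\<forall>j\<in>J0. z j \<in> Ug j) \<longrightarrow> condQ x y z)"
  defines "MFCQ \<equiv> (\<forall>i\<in>I. Df i \<inter> span (\<Union>k\<in>I - {i}. Df k) = {}) \<and>
           (\<exists>v0. (\<forall>i\<in>I. \<forall>\<phi>\<in>Df i. blinfun_apply \<phi> v0 = 0) \<and>
                 (\<forall>j\<in>J0. \<forall>\<phi>\<in>Dg j. blinfun_apply \<phi> v0 < 0))"
  assumes feq: "\<forall>i\<in>I. f i xbar = 0"
    and gle: "\<forall>j\<in>{1..l}. g j xbar \<le> 0"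
    and qdf: "\<forall>i\<in>I. is_quasidiff (f i) xbar (Lf i) (Uf i)"
    and qdg: "\<forall>j\<in>J0. is_quasidiff (g j) xbar (Lg j) (Ug j)"
  shows "(condA \<and> condB \<longrightarrow> QforAll)
    \<and> ((\<forall>i\<in>I. closedin wstar_topology (span (\<Union>k\<in>I - {i}. Df k))) \<and>
         closedin wstar_topology (span (\<Union>i\<in>I. Df i)) \<longrightarrow>
         (QforAll \<longrightarrow> condA \<and> condB))
    \<and> ((\<forall>i\<in>I. closedin wstar_topology (span (\<Union>k\<in>I - {i}. Df k))) \<longrightarrow>
         (condA \<and> condB \<longleftrightarrow> MFCQ))"
proof -
  have J0: "finite J0" unfolding J0_def by simp
  have LU: "\<forall>i\<in>I. nonempty_convex_wstar_compact (Lf i) \<and> nonempty_convex_wstar_compact (Uf i)"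
    using qdf is_quasidiff_imp_nonempty_convex_wstar_compact by blast
  have GH: "\<forall>j\<in>J0. nonempty_convex_wstar_compact (Lg j) \<and> nonempty_convex_wstar_compact (Ug j)"
    using qdg is_quasidiff_imp_nonempty_convex_wstar_compact by blast
  show ?thesis
    unfolding condA_def condB_def QforAll_def condQ_def MFCQ_def Df_def Dg_def
    by (intro conjI
        conditions_AB_imp_condition_Q[OF J0 LU GH, unfolded wstar_strongly_independent_def condition_Q_def]
        condition_Q_imp_conditions_AB[OF J0 LU GH, unfolded wstar_strongly_independent_def condition_Q_def]
        conditions_AB_iff_MFCQ[OF J0 GH, unfolded wstar_strongly_independent_def strongly_independent_def])
qed
end
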